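(* Let $G_*$ be a crossed simplicial group with structural short exact sequence $1 \to P_* \to G_* \xrightarrow{\pi} N_* \to 1$, and let $\Gamma_n = G_n/\!\!/P_n$ be the action groupoids. For $0\le i\le n$ define $s_i\colon\Gamma_n\to\Gamma_{n+1}$ and $d_i\colon\Gamma_n\to\Gamma_{n-1}$ by $$s_i[\sigma,f]=[s_i(\sigma),\, s_{\sigma^{-1}(i)}(f^{-1})^{-1}],\qquad d_i[\sigma,f]=[d_i(\sigma),\, d_{\sigma^{-1}(i)}(f^{-1})^{-1}].$$ Then these maps are functors of groupoids and make $\{\Gamma_n\}_{n\ge0}$ a simplicial groupoid, i.e. they satisfy the simplicial identities.
   Context: A crossed simplicial group $G_*$ consists of groups $G_n$ ($n\ge0$), a left action of $G_n$ on $[n]=\{0,\dots,n\}$, and maps $d_i\colon G_n\to G_{n-1}$, $s_i\colon G_n\to G_{n+1}$ making $G_*$ a simplicial set, such that $d_i(gh)=d_i(g)d_{g^{-1}(i)}(h)$ and $s_i(gh)=s_i(g)s_{g^{-1}(i)}(h)$. Every crossed simplicial group fits into a canonical (structural) short exact sequence of crossed simplicial groups $1\to P_*\to G_*\xrightarrow{\pi}N_*\to1$, where $P_*$ is a simplicial group acting trivially on each $[n]$ (so the action of $G_n$ on $[n]$ factors through $N_n$) and $N_*$ is one of seven specific crossed simplicial groups. The action groupoid $\Gamma_n=G_n/\!\!/P_n$ has as objects the elements $\sigma$ of $G_n/P_n=N_n$, and a morphism $\sigma\to\sigma\pi(f)^{-1}$ for each $f\in G_n$, written $[\sigma,f]$;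 composition is $[\sigma\pi(f)^{-1},g]\cdot[\sigma,f]=[\sigma,gf]$. In the formulas, $s_i(\sigma), d_i(\sigma)$ are computed in $N_*$, $\sigma^{-1}(i)$ uses the action of $N_n$ on $[n]$, and the outer $s_j, d_j$ on $f^{-1}$ are those of $G_*$. *)

theory Defs
  imports "HOL-Algebra.Group"
begin

definition simplicial_set ::
  "(nat \<Rightarrow> 'a set) \<Rightarrow> (nat \<Rightarrow> nat \<Rightarrow> 'a \<Rightarrow> 'a) \<Rightarrow> (nat \<Rightarrow> nat \<Rightarrow> 'a \<Rightarrow> 'a) \<Rightarrow> bool" where
  "simplicial_set C d s \<longleftrightarrow>
     (\<forall>n i x. 1 \<le> n \<and> i \<le> n \<and> x \<in> C n \<longrightarrow> d n i x \<in> C (n - 1)) \<and>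
     (\<forall>n i x. i \<le> n \<and> x \<in> C n \<longrightarrow> s n i x \<in> C (Suc n)) \<and>
     \<comment> \<open>d_i d_j = d_(j-1) d_i  for i < j\<close>
     (\<forall>n i j x. 2 \<le> n \<and> i < j \<and> j \<le> n \<and> x \<in> C n \<longrightarrow>
        d (n - 1) i (d n j x) = d (n - 1) (j - 1) (d n i x)) \<and>
     \<comment> \<open>d_i s_j = s_(j-1) d_i  for i < j\<close>
     (\<forall>n i j x. i < j \<and> j \<le> n \<and> x \<in> C n \<longrightarrow>
        d (Suc n) i (s n j x) = s (n - 1) (j - 1) (d n i x)) \<and>
     \<comment> \<open>d_j s_j = id = d_(j+1) s_j\<close>
     (\<forall>n j x. j \<le> n \<and> x \<in> C n \<longrightarrow>
        d (Suc n) j (s n j x) = x \<and> d (Suc n) (Suc j) (s n j x) = x) \<and>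
     \<comment> \<open>d_i s_j = s_j d_(i-1)  for i > j+1\<close>
     (\<forall>n i j x. Suc j < i \<and> i \<le> Suc n \<and> x \<in> C n \<longrightarrow>
        d (Suc n) i (s n j x) = s (n - 1) j (d n (i - 1) x)) \<and>
     \<comment> \<open>s_i s_j = s_(j+1) s_i  for i <= j\<close>
     (\<forall>n i j x. i \<le> j \<and> j \<le> n \<and> x \<in> C n \<longrightarrow>
        s (Suc n) i (s n j x) = s (Suc n) (Suc j) (s n i x))"

definition crossed_simplicial_group ::
  "(nat \<Rightarrow> 'g monoid) \<Rightarrow> (nat \<Rightarrow> 'g \<Rightarrow> nat \<Rightarrow> nat) \<Rightarrow>
   (nat \<Rightarrow> nat \<Rightarrow> 'g \<Rightarrow> 'g) \<Rightarrow> (nat \<Rightarrow> nat \<Rightarrow> 'g \<Rightarrow> 'g) \<Rightarrow> bool" where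
  "crossed_simplicial_group G act d s \<longleftrightarrow>
     (\<forall>n. group (G n)) \<and>
     (\<forall>n g i. g \<in> carrier (G n) \<and> i \<le> n \<longrightarrow> act n g i \<le> n) \<and>
     (\<forall>n i. i \<le> n \<longrightarrow> act n \<one>\<^bsub>G n\<^esub> i = i) \<and>
     (\<forall>n g h i. g \<in> carrier (G n) \<and> h \<in> carrier (G n) \<and> i \<le> n \<longrightarrow>
        act n (g \<otimes>\<^bsub>G n\<^esub> h) i = act n g (act n h i)) \<and>
     simplicial_set (\<lambda>n. carrier (G n)) d s \<and>
     (\<forall>n i g h. 1 \<le> n \<and> i \<le> n \<and> g \<in> carrier (G n) \<and> h \<in> carrier (G n) \<longrightarrow>
        d n i (g \<otimes>\<^bsub>G n\<^esub> h) =
          d n i g \<otimes>\<^bsub>G (n - 1)\<^esub> d n (act n (inv\<^bsub>G n\<^esub> g) i) h) \<and>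
     (\<forall>n i g h. i \<le> n \<and> g \<in> carrier (G n) \<and> h \<in> carrier (G n) \<longrightarrow>
        s n i (g \<otimes>\<^bsub>G n\<^esub> h) =
          s n i g \<otimes>\<^bsub>G (Suc n)\<^esub> s n (act n (inv\<^bsub>G n\<^esub> g) i) h)"

text \<open>Its kernel P n is a simplicial group acting
  trivially on [n], giving the exact sequence 1 -> P -> G -> N -> 1.\<close>

definition csg_quotient_map ::
  "(nat \<Rightarrow> 'g monoid) \<Rightarrow> (nat \<Rightarrow> 'g \<Rightarrow> nat \<Rightarrow> nat) \<Rightarrow>
   (nat \<Rightarrow> nat \<Rightarrow> 'g \<Rightarrow> 'g) \<Rightarrow> (nat \<Rightarrow> nat \<Rightarrow> 'g \<Rightarrow> 'g) \<Rightarrow>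
   (nat \<Rightarrow> 'n monoid) \<Rightarrow> (nat \<Rightarrow> 'n \<Rightarrow> nat \<Rightarrow> nat) \<Rightarrow>
   (nat \<Rightarrow> nat \<Rightarrow> 'n \<Rightarrow> 'n) \<Rightarrow> (nat \<Rightarrow> nat \<Rightarrow> 'n \<Rightarrow> 'n) \<Rightarrow>
   (nat \<Rightarrow> 'g \<Rightarrow> 'n) \<Rightarrow> bool" where
  "csg_quotient_map G actG dG sG N actN dN sN \<pi> \<longleftrightarrow>
     (\<forall>n. \<pi> n \<in> hom (G n) (N n)) \<and>
     (\<forall>n. \<pi> n ` carrier (G n) = carrier (N n)) \<and>
     (\<forall>n i g. 1 \<le> n \<and> i \<le> n \<and> g \<in> carrier (G n) \<longrightarrow> \<pi> (n - 1) (dG n i g) = dN n i (\<pi> n g)) \<and>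
     (\<forall>n i g. i \<le> n \<and> g \<in> carrier (G n) \<longrightarrow> \<pi> (Suc n) (sG n i g) = sN n i (\<pi> n g)) \<and>
     (\<forall>n g i. g \<in> carrier (G n) \<and> i \<le> n \<longrightarrow> actG n g i = actN n (\<pi> n g) i)"

text \<open>The kernel P n (only for documentation).\<close>
definition csg_kernel :: "(nat \<Rightarrow> 'g monoid) \<Rightarrow> (nat \<Rightarrow> 'n monoid) \<Rightarrow> (nat \<Rightarrow> 'g \<Rightarrow> 'n) \<Rightarrow> nat \<Rightarrow> 'g set" where
  "csg_kernel G N \<pi> n = {g \<in> carrier (G n). \<pi> n g = \<one>\<^bsub>N n\<^esub>}"

text \<open>The action groupoid Gamma n = G n // P n: objects are the elements of
  N n = G n / P n, a morphism [sigma, f] (f in G n) goes from sigma to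
  sigma * pi(f)^-1; composition [sigma pi(f)^-1, g] . [sigma, f] = [sigma, g f].\<close>

definition gpd_mor :: "(nat \<Rightarrow> 'g monoid) \<Rightarrow> (nat \<Rightarrow> 'n monoid) \<Rightarrow> nat \<Rightarrow> ('n \<times> 'g) set" where
  "gpd_mor G N n = carrier (N n) \<times> carrier (G n)"

definition gpd_src :: "'n \<times> 'g \<Rightarrow> 'n" where
  "gpd_src x = fst x"

definition gpd_tgt :: "(nat \<Rightarrow> 'n monoid) \<Rightarrow> (nat \<Rightarrow> 'g \<Rightarrow> 'n) \<Rightarrow> nat \<Rightarrow> 'n \<times> 'g \<Rightarrow> 'n" where
  "gpd_tgt N \<pi> n x = fst x \<otimes>\<^bsub>N n\<^esub> inv\<^bsub>N n\<^esub> (\<pi> n (snd x))"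

definition gpd_id :: "(nat \<Rightarrow> 'g monoid) \<Rightarrow> nat \<Rightarrow> 'n \<Rightarrow> 'n \<times> 'g" where
  "gpd_id G n \<sigma> = (\<sigma>, \<one>\<^bsub>G n\<^esub>)"

text \<open>gpd_comp G n y x = y . x (first x, then y).\<close>
definition gpd_comp :: "(nat \<Rightarrow> 'g monoid) \<Rightarrow> nat \<Rightarrow> 'n \<times> 'g \<Rightarrow> 'n \<times> 'g \<Rightarrow> 'n \<times> 'g" where
  "gpd_comp G n y x = (fst x, snd y \<otimes>\<^bsub>G n\<^esub> snd x)"

definition gpd_functor ::
  "(nat \<Rightarrow> 'g monoid) \<Rightarrow> (nat \<Rightarrow> 'n monoid) \<Rightarrow> (nat \<Rightarrow> 'g \<Rightarrow> 'n) \<Rightarrow> nat \<Rightarrow> nat \<Rightarrow>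
   ('n \<Rightarrow> 'n) \<Rightarrow> ('n \<times> 'g \<Rightarrow> 'n \<times> 'g) \<Rightarrow> bool" where
  "gpd_functor G N \<pi> n m Fob Fmor \<longleftrightarrow>
     (\<forall>\<sigma>\<in>carrier (N n). Fob \<sigma> \<in> carrier (N m)) \<and>
     (\<forall>x\<in>gpd_mor G N n. Fmor x \<in> gpd_mor G N m \<and>
        gpd_src (Fmor x) = Fob (gpd_src x) \<and>
        gpd_tgt N \<pi> m (Fmor x) = Fob (gpd_tgt N \<pi> n x)) \<and>
     (\<forall>\<sigma>\<in>carrier (N n). Fmor (gpd_id G n \<sigma>) = gpd_id G m (Fob \<sigma>)) \<and>
     (\<forall>x\<in>gpd_mor G N n. \<forall>y\<in>gpd_mor G N n. gpd_src y = gpd_tgt N \<pi> n x \<longrightarrow>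
        Fmor (gpd_comp G n y x) = gpd_comp G m (Fmor y) (Fmor x))"

definition gpd_s ::
  "(nat \<Rightarrow> 'g monoid) \<Rightarrow> (nat \<Rightarrow> nat \<Rightarrow> 'g \<Rightarrow> 'g) \<Rightarrow>
   (nat \<Rightarrow> 'n monoid) \<Rightarrow> (nat \<Rightarrow> 'n \<Rightarrow> nat \<Rightarrow> nat) \<Rightarrow> (nat \<Rightarrow> nat \<Rightarrow> 'n \<Rightarrow> 'n) \<Rightarrow>
   nat \<Rightarrow> nat \<Rightarrow> 'n \<times> 'g \<Rightarrow> 'n \<times> 'g" where
  "gpd_s G sG N actN sN n i x =
     (sN n i (fst x),
      inv\<^bsub>G (Suc n)\<^esub> (sG n (actN n (inv\<^bsub>N n\<^esub> (fst x)) i) (inv\<^bsub>G n\<^esub> (snd x))))"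

definition gpd_d ::
  "(nat \<Rightarrow> 'g monoid) \<Rightarrow> (nat \<Rightarrow> nat \<Rightarrow> 'g \<Rightarrow> 'g) \<Rightarrow>
   (nat \<Rightarrow> 'n monoid) \<Rightarrow> (nat \<Rightarrow> 'n \<Rightarrow> nat \<Rightarrow> nat) \<Rightarrow> (nat \<Rightarrow> nat \<Rightarrow> 'n \<Rightarrow> 'n) \<Rightarrow>
   nat \<Rightarrow> nat \<Rightarrow> 'n \<times> 'g \<Rightarrow> 'n \<times> 'g" where
  "gpd_d G dG N actN dN n i x =
     (dN n i (fst x),
      inv\<^bsub>G (n - 1)\<^esub> (dG n (actN n (inv\<^bsub>N n\<^esub> (fst x)) i) (inv\<^bsub>G n\<^esub> (snd x))))"

end

theory Submission
  imports Defs
begin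

(* Write [pi g, h^-1 g] for the morphism pi g -> pi h of Gamma_n. Every morphism has this
   form, and the crossed rule d_i(g k) = d_i(g) d_(g^-1(i))(k), applied with k = g^-1 h,
   says precisely that d_i [pi g, h^-1 g] = [pi (d_i g), (d_i h)^-1 d_i g], and likewise
   for s_i. So Gamma_* is the image of the simplicial set of pairs (g, h) in G_* x G_* under
   a map commuting with faces and degeneracies, which makes all simplicial identities
   and the functoriality of d_i and s_i immediate. *)

lemma simplicial_set_prod:
  assumes "simplicial_set C d s" and "simplicial_set C' d' s'"
  shows "simplicial_set (\<lambda>n. C n \<times> C' n)
           (\<lambda>n i. map_prod (d n i) (d' n i)) (\<lambda>n i. map_prod (s n i) (s' n i))"
  using assms unfolding simplicial_set_def by auto

lemma simplicial_set_image:
  assumes ss: "simplicial_set C d s"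
    and onto: "\<And>n. \<Phi> n ` C n = D n"
    and face: "\<And>n i x. 1 \<le> n \<Longrightarrow> i \<le> n \<Longrightarrow> x \<in> C n \<Longrightarrow> d' n i (\<Phi> n x) = \<Phi> (n - 1) (d n i x)"
    and degeneracy: "\<And>n i x. i \<le> n \<Longrightarrow> x \<in> C n \<Longrightarrow> s' n i (\<Phi> n x) = \<Phi> (Suc n) (s n i x)"
  shows "simplicial_set D d' s'"
  using ss unfolding simplicial_set_def onto[symmetric]
  by (auto simp: face degeneracy)

definition gpd_arrow :: "(nat \<Rightarrow> 'g monoid) \<Rightarrow> (nat \<Rightarrow> 'g \<Rightarrow> 'n) \<Rightarrow> nat \<Rightarrow> 'g \<Rightarrow> 'g \<Rightarrow> 'n \<times> 'g" where
  "gpd_arrow G \<pi> n g h = (\<pi> n g, inv\<^bsub>G n\<^esub> h \<otimes>\<^bsub>G n\<^esub> g)"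

locale action_groupoid = group_hom "G n" "N n" "\<pi> n"
  for G :: "nat \<Rightarrow> 'g monoid" and N :: "nat \<Rightarrow> 'n monoid" and \<pi> :: "nat \<Rightarrow> 'g \<Rightarrow> 'n"
    and n :: nat +
  assumes \<pi>_onto: "\<pi> n ` carrier (G n) = carrier (N n)"
begin

lemma gpd_arrow_mor:
  "g \<in> carrier (G n) \<Longrightarrow> h \<in> carrier (G n) \<Longrightarrow> gpd_arrow G \<pi> n g h \<in> gpd_mor G N n"
  by (simp add: gpd_arrow_def gpd_mor_def)

lemma gpd_src_arrow: "gpd_src (gpd_arrow G \<pi> n g h) = \<pi> n g"
  by (simp add: gpd_arrow_def gpd_src_def)

lemma gpd_tgt_arrow:
  "g \<in> carrier (G n) \<Longrightarrow> h \<in> carrier (G n) \<Longrightarrow> gpd_tgt N \<pi> n (gpd_arrow G \<pi> n g h) = \<pi> n h"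
  by (simp add: gpd_arrow_def gpd_tgt_def H.inv_mult_group H.m_assoc[symmetric])

lemma gpd_id_arrow: "g \<in> carrier (G n) \<Longrightarrow> gpd_id G n (\<pi> n g) = gpd_arrow G \<pi> n g g"
  by (simp add: gpd_arrow_def gpd_id_def)

lemma gpd_comp_arrow:
  "g \<in> carrier (G n) \<Longrightarrow> h \<in> carrier (G n) \<Longrightarrow> k \<in> carrier (G n) \<Longrightarrow>
   gpd_comp G n (gpd_arrow G \<pi> n h k) (gpd_arrow G \<pi> n g h) = gpd_arrow G \<pi> n g k"
  by (simp add: gpd_arrow_def gpd_comp_def G.m_assoc) (simp add: G.m_assoc[symmetric])

lemma gpd_mor_arrow_at_srcE:
  assumes "x \<in> gpd_mor G N n" and "g \<in> carrier (G n)" and "\<pi> n g = gpd_src x"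
  obtains h where "h \<in> carrier (G n)" and "x = gpd_arrow G \<pi> n g h"
proof -
  obtain \<sigma> f where x: "x = (\<sigma>, f)" and f: "f \<in> carrier (G n)"
    using assms(1) by (auto simp: gpd_mor_def)
  show thesis
  proof
    show "g \<otimes>\<^bsub>G n\<^esub> inv\<^bsub>G n\<^esub> f \<in> carrier (G n)"
      using assms f by simp
    show "x = gpd_arrow G \<pi> n g (g \<otimes>\<^bsub>G n\<^esub> inv\<^bsub>G n\<^esub> f)"
      using assms f by (simp add: x gpd_arrow_def gpd_src_def G.inv_mult_group G.m_assoc)
  qed
qed

lemma gpd_mor_arrowE:
  assumes x: "x \<in> gpd_mor G N n"
  obtains g h where "g \<in> carrier (G n)" and "h \<in> carrier (G n)" and "x = gpd_arrow G \<pi> n g h"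
proof -
  obtain g where g: "g \<in> carrier (G n)" and "\<pi> n g = gpd_src x"
    using x \<pi>_onto by (metis gpd_mor_def gpd_src_def imageE mem_Sigma_iff prod.collapse)
  with x obtain h where "h \<in> carrier (G n)" and "x = gpd_arrow G \<pi> n g h"
    by (rule gpd_mor_arrow_at_srcE)
  with g show thesis
    by (rule that)
qed

lemma gpd_mor_eq_arrows:
  "case_prod (gpd_arrow G \<pi> n) ` (carrier (G n) \<times> carrier (G n)) = gpd_mor G N n"
proof (intro equalityI subsetI)
  fix x assume "x \<in> gpd_mor G N n"
  then obtain g h where "g \<in> carrier (G n)" and "h \<in> carrier (G n)" and "x = gpd_arrow G \<pi> n g h"
    by (rule gpd_mor_arrowE)
  then show "x \<in> case_prod (gpd_arrow G \<pi> n) ` (carrier (G n) \<times> carrier (G n))"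
    by force
qed (auto simp: gpd_arrow_mor)

lemma \<pi>_preimageE:
  assumes "\<sigma> \<in> carrier (N n)"
  obtains g where "g \<in> carrier (G n)" and "\<sigma> = \<pi> n g"
  using assms \<pi>_onto by (metis imageE)

end

lemma gpd_functorI:
  assumes source: "action_groupoid G N \<pi> n" and target: "action_groupoid G N \<pi> m"
    and F_closed: "\<And>g. g \<in> carrier (G n) \<Longrightarrow> F g \<in> carrier (G m)"
    and F_ob: "\<And>g. g \<in> carrier (G n) \<Longrightarrow> Fob (\<pi> n g) = \<pi> m (F g)"
    and F_mor: "\<And>g h. g \<in> carrier (G n) \<Longrightarrow> h \<in> carrier (G n) \<Longrightarrow>
                   Fmor (gpd_arrow G \<pi> n g h) = gpd_arrow G \<pi> m (F g) (F h)"
  shows "gpd_functor G N \<pi> n m Fob Fmor"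
  unfolding gpd_functor_def
proof (intro conjI ballI impI)
  interpret S: action_groupoid G N \<pi> n by (rule source)
  interpret T: action_groupoid G N \<pi> m by (rule target)
  fix \<sigma> assume "\<sigma> \<in> carrier (N n)"
  then obtain g where g: "g \<in> carrier (G n)" and \<sigma>: "\<sigma> = \<pi> n g"
    by (rule S.\<pi>_preimageE)
  show "Fob \<sigma> \<in> carrier (N m)"
    using g by (simp add: \<sigma> F_ob F_closed)
  show "Fmor (gpd_id G n \<sigma>) = gpd_id G m (Fob \<sigma>)"
    using g by (simp add: \<sigma> F_ob F_closed F_mor S.gpd_id_arrow T.gpd_id_arrow)
next
  interpret S: action_groupoid G N \<pi> n by (rule source)
  interpret T: action_groupoid G N \<pi> m by (rule target)
  fix x assume "x \<in> gpd_mor G N n"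
  then obtain g h where g: "g \<in> carrier (G n)" and h: "h \<in> carrier (G n)"
    and x: "x = gpd_arrow G \<pi> n g h"
    by (rule S.gpd_mor_arrowE)
  show "Fmor x \<in> gpd_mor G N m"
    and "gpd_src (Fmor x) = Fob (gpd_src x)"
    and "gpd_tgt N \<pi> m (Fmor x) = Fob (gpd_tgt N \<pi> n x)"
    using g h by (simp_all add: x F_mor F_closed F_ob T.gpd_arrow_mor S.gpd_src_arrow T.gpd_src_arrow
        S.gpd_tgt_arrow T.gpd_tgt_arrow)
  fix y assume y: "y \<in> gpd_mor G N n" and "gpd_src y = gpd_tgt N \<pi> n x"
  then have "\<pi> n h = gpd_src y"
    using g h by (simp add: x S.gpd_tgt_arrow)
  with y h obtain k where k: "k \<in> carrier (G n)" and y: "y = gpd_arrow G \<pi> n h k"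
    by (rule S.gpd_mor_arrow_at_srcE)
  show "Fmor (gpd_comp G n y x) = gpd_comp G m (Fmor y) (Fmor x)"
    using g h k by (simp add: x y F_mor F_closed S.gpd_comp_arrow T.gpd_comp_arrow)
qed

locale crossed_simplicial =
  fixes G :: "nat \<Rightarrow> 'g monoid" and act :: "nat \<Rightarrow> 'g \<Rightarrow> nat \<Rightarrow> nat"
    and d s :: "nat \<Rightarrow> nat \<Rightarrow> 'g \<Rightarrow> 'g"
  assumes crossed: "crossed_simplicial_group G act d s"
begin

lemma group_G: "group (G n)"
  using crossed unfolding crossed_simplicial_group_def by (elim conjE) simp

lemma act_le: "g \<in> carrier (G n) \<Longrightarrow> i \<le> n \<Longrightarrow> act n g i \<le> n"
  using crossed unfolding crossed_simplicial_group_def by (elim conjE) simp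

lemma simplicial_set_carrier: "simplicial_set (\<lambda>n. carrier (G n)) d s"
  using crossed unfolding crossed_simplicial_group_def by (elim conjE) simp

lemma face_closed: "1 \<le> n \<Longrightarrow> i \<le> n \<Longrightarrow> g \<in> carrier (G n) \<Longrightarrow> d n i g \<in> carrier (G (n - 1))"
  using simplicial_set_carrier unfolding simplicial_set_def by (elim conjE) simp

lemma degeneracy_closed: "i \<le> n \<Longrightarrow> g \<in> carrier (G n) \<Longrightarrow> s n i g \<in> carrier (G (Suc n))"
  using simplicial_set_carrier unfolding simplicial_set_def by (elim conjE) simp

lemma face_mult:
  "1 \<le> n \<Longrightarrow> i \<le> n \<Longrightarrow> g \<in> carrier (G n) \<Longrightarrow> h \<in> carrier (G n) \<Longrightarrow>
   d n i (g \<otimes>\<^bsub>G n\<^esub> h) = d n i g \<otimes>\<^bsub>G (n - 1)\<^esub> d n (act n (inv\<^bsub>G n\<^esub> g) i) h"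
  using crossed unfolding crossed_simplicial_group_def by (elim conjE) simp

lemma degeneracy_mult:
  "i \<le> n \<Longrightarrow> g \<in> carrier (G n) \<Longrightarrow> h \<in> carrier (G n) \<Longrightarrow>
   s n i (g \<otimes>\<^bsub>G n\<^esub> h) = s n i g \<otimes>\<^bsub>G (Suc n)\<^esub> s n (act n (inv\<^bsub>G n\<^esub> g) i) h"
  using crossed unfolding crossed_simplicial_group_def by (elim conjE) simp

lemma face_twist:
  assumes n: "1 \<le> n" and i: "i \<le> n" and g: "g \<in> carrier (G n)" and h: "h \<in> carrier (G n)"
  shows "d n (act n (inv\<^bsub>G n\<^esub> g) i) (inv\<^bsub>G n\<^esub> g \<otimes>\<^bsub>G n\<^esub> h) =
    inv\<^bsub>G (n - 1)\<^esub> d n i g \<otimes>\<^bsub>G (n - 1)\<^esub> d n i h"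
proof -
  interpret G: group "G n" by (rule group_G)
  interpret G': group "G (n - 1)" by (rule group_G)
  have "d n i h = d n i (g \<otimes>\<^bsub>G n\<^esub> (inv\<^bsub>G n\<^esub> g \<otimes>\<^bsub>G n\<^esub> h))"
    using g h by (simp add: G.m_assoc[symmetric])
  also have "\<dots> = d n i g \<otimes>\<^bsub>G (n - 1)\<^esub> d n (act n (inv\<^bsub>G n\<^esub> g) i) (inv\<^bsub>G n\<^esub> g \<otimes>\<^bsub>G n\<^esub> h)"
    using n i g h by (simp add: face_mult)
  moreover have "d n i g \<in> carrier (G (n - 1))"
    and "d n (act n (inv\<^bsub>G n\<^esub> g) i) (inv\<^bsub>G n\<^esub> g \<otimes>\<^bsub>G n\<^esub> h) \<in> carrier (G (n - 1))"
    using n i g h by (intro face_closed act_le; simp)+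
  ultimately show ?thesis
    \<comment> \<open>simp would rewrite G (n - 1) to G (n - Suc 0), out of reach of the facts about G (n - 1)\<close>
    by (intro G'.inv_solve_left[THEN iffD2]) (simp_all del: One_nat_def)
qed

lemma degeneracy_twist:
  assumes i: "i \<le> n" and g: "g \<in> carrier (G n)" and h: "h \<in> carrier (G n)"
  shows "s n (act n (inv\<^bsub>G n\<^esub> g) i) (inv\<^bsub>G n\<^esub> g \<otimes>\<^bsub>G n\<^esub> h) =
    inv\<^bsub>G (Suc n)\<^esub> s n i g \<otimes>\<^bsub>G (Suc n)\<^esub> s n i h"
proof -
  interpret G: group "G n" by (rule group_G)
  interpret G': group "G (Suc n)" by (rule group_G)
  have "s n i h = s n i (g \<otimes>\<^bsub>G n\<^esub> (inv\<^bsub>G n\<^esub> g \<otimes>\<^bsub>G n\<^esub> h))"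
    using g h by (simp add: G.m_assoc[symmetric])
  also have "\<dots> = s n i g \<otimes>\<^bsub>G (Suc n)\<^esub> s n (act n (inv\<^bsub>G n\<^esub> g) i) (inv\<^bsub>G n\<^esub> g \<otimes>\<^bsub>G n\<^esub> h)"
    using i g h by (simp add: degeneracy_mult)
  moreover have "s n i g \<in> carrier (G (Suc n))"
    and "s n (act n (inv\<^bsub>G n\<^esub> g) i) (inv\<^bsub>G n\<^esub> g \<otimes>\<^bsub>G n\<^esub> h) \<in> carrier (G (Suc n))"
    using i g h by (intro degeneracy_closed act_le; simp)+
  ultimately show ?thesis
    by (intro G'.inv_solve_left[THEN iffD2]) simp_all
qed

end

locale csg_structural_sequence =
  G: crossed_simplicial G actG dG sG + N: crossed_simplicial N actN dN sN
  for G :: "nat \<Rightarrow> 'g monoid" and actG :: "nat \<Rightarrow> 'g \<Rightarrow> nat \<Rightarrow> nat"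
    and dG sG :: "nat \<Rightarrow> nat \<Rightarrow> 'g \<Rightarrow> 'g"
    and N :: "nat \<Rightarrow> 'n monoid" and actN :: "nat \<Rightarrow> 'n \<Rightarrow> nat \<Rightarrow> nat"
    and dN sN :: "nat \<Rightarrow> nat \<Rightarrow> 'n \<Rightarrow> 'n" +
  fixes \<pi> :: "nat \<Rightarrow> 'g \<Rightarrow> 'n"
  assumes quotient: "csg_quotient_map G actG dG sG N actN dN sN \<pi>"
begin

lemma action_groupoid: "action_groupoid G N \<pi> n"
  using quotient unfolding action_groupoid_def action_groupoid_axioms_def csg_quotient_map_def
  by (simp add: group_hom_def group_hom_axioms_def G.group_G N.group_G)

lemma \<pi>_face:
  "1 \<le> n \<Longrightarrow> i \<le> n \<Longrightarrow> g \<in> carrier (G n) \<Longrightarrow> dN n i (\<pi> n g) = \<pi> (n - 1) (dG n i g)"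
  using quotient unfolding csg_quotient_map_def by (elim conjE) simp

lemma \<pi>_degeneracy:
  "i \<le> n \<Longrightarrow> g \<in> carrier (G n) \<Longrightarrow> sN n i (\<pi> n g) = \<pi> (Suc n) (sG n i g)"
  using quotient unfolding csg_quotient_map_def by (elim conjE) simp

lemma act_\<pi>: "g \<in> carrier (G n) \<Longrightarrow> i \<le> n \<Longrightarrow> actN n (\<pi> n g) i = actG n g i"
  using quotient unfolding csg_quotient_map_def by (elim conjE) simp

lemma gpd_d_arrow:
  assumes n: "1 \<le> n" and i: "i \<le> n" and g: "g \<in> carrier (G n)" and h: "h \<in> carrier (G n)"
  shows "gpd_d G dG N actN dN n i (gpd_arrow G \<pi> n g h) = gpd_arrow G \<pi> (n - 1) (dG n i g) (dG n i h)"
proof -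
  interpret action_groupoid G N \<pi> n by (rule action_groupoid)
  interpret G': group "G (n - 1)" by (rule G.group_G)
  have "actN n (inv\<^bsub>N n\<^esub> \<pi> n g) i = actG n (inv\<^bsub>G n\<^esub> g) i"
    using g i by (simp flip: hom_inv add: act_\<pi>)
  moreover have "dG n i g \<in> carrier (G (n - 1))" and "dG n i h \<in> carrier (G (n - 1))"
    using n i g h by (intro G.face_closed; simp)+
  ultimately show ?thesis
    using n i g h
    by (simp del: One_nat_def
        add: gpd_d_def gpd_arrow_def \<pi>_face G.inv_mult_group G.face_twist G'.inv_mult_group)
qed

lemma gpd_s_arrow:
  assumes i: "i \<le> n" and g: "g \<in> carrier (G n)" and h: "h \<in> carrier (G n)"
  shows "gpd_s G sG N actN sN n i (gpd_arrow G \<pi> n g h) = gpd_arrow G \<pi> (Suc n) (sG n i g) (sG n i h)"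
proof -
  interpret action_groupoid G N \<pi> n by (rule action_groupoid)
  interpret G': group "G (Suc n)" by (rule G.group_G)
  have "actN n (inv\<^bsub>N n\<^esub> \<pi> n g) i = actG n (inv\<^bsub>G n\<^esub> g) i"
    using g i by (simp flip: hom_inv add: act_\<pi>)
  moreover have "sG n i g \<in> carrier (G (Suc n))" and "sG n i h \<in> carrier (G (Suc n))"
    using i g h by (simp_all add: G.degeneracy_closed)
  ultimately show ?thesis
    using i g h
    by (simp add: gpd_s_def gpd_arrow_def \<pi>_degeneracy G.inv_mult_group G.degeneracy_twist
        G'.inv_mult_group)
qed

lemma gpd_d_functor:
  assumes "1 \<le> n" and "i \<le> n"
  shows "gpd_functor G N \<pi> n (n - 1) (dN n i) (gpd_d G dG N actN dN n i)"
  using assms by (intro gpd_functorI[where F = "dG n i"] action_groupoid)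
    (simp_all del: One_nat_def add: G.face_closed \<pi>_face gpd_d_arrow)

lemma gpd_s_functor:
  assumes "i \<le> n"
  shows "gpd_functor G N \<pi> n (Suc n) (sN n i) (gpd_s G sG N actN sN n i)"
  using assms by (intro gpd_functorI[where F = "sG n i"] action_groupoid)
    (simp_all add: G.degeneracy_closed \<pi>_degeneracy gpd_s_arrow)

lemma gpd_simplicial_set: "simplicial_set (gpd_mor G N) (gpd_d G dG N actN dN) (gpd_s G sG N actN sN)"
proof (rule simplicial_set_image)
  show "simplicial_set (\<lambda>n. carrier (G n) \<times> carrier (G n))
      (\<lambda>n i. map_prod (dG n i) (dG n i)) (\<lambda>n i. map_prod (sG n i) (sG n i))"
    by (intro simplicial_set_prod G.simplicial_set_carrier)
  show "case_prod (gpd_arrow G \<pi> n) ` (carrier (G n) \<times> carrier (G n)) = gpd_mor G N n" for n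
    by (rule action_groupoid.gpd_mor_eq_arrows[OF action_groupoid])
qed (auto simp: gpd_d_arrow gpd_s_arrow)

end

theorem lemma1p8:
  fixes G :: "nat \<Rightarrow> 'g monoid" and actG :: "nat \<Rightarrow> 'g \<Rightarrow> nat \<Rightarrow> nat"
    and dG sG :: "nat \<Rightarrow> nat \<Rightarrow> 'g \<Rightarrow> 'g"
    and N :: "nat \<Rightarrow> 'n monoid" and actN :: "nat \<Rightarrow> 'n \<Rightarrow> nat \<Rightarrow> nat"
    and dN sN :: "nat \<Rightarrow> nat \<Rightarrow> 'n \<Rightarrow> 'n"
    and \<pi> :: "nat \<Rightarrow> 'g \<Rightarrow> 'n"
  assumes "crossed_simplicial_group G actG dG sG"
    and "crossed_simplicial_group N actN dN sN"
    and "csg_quotient_map G actG dG sG N actN dN sN \<pi>"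
  shows "(\<forall>n i. i \<le> n \<longrightarrow>
            gpd_functor G N \<pi> n (Suc n) (sN n i) (gpd_s G sG N actN sN n i))
       \<and> (\<forall>n i. 1 \<le> n \<and> i \<le> n \<longrightarrow>
            gpd_functor G N \<pi> n (n - 1) (dN n i) (gpd_d G dG N actN dN n i))
       \<and> simplicial_set (gpd_mor G N) (gpd_d G dG N actN dN) (gpd_s G sG N actN sN)"
proof -
  interpret csg_structural_sequence G actG dG sG N actN dN sN \<pi>
    using assms by (simp add: csg_structural_sequence_def csg_structural_sequence_axioms_def crossed_simplicial_def)
  show ?thesis
    using gpd_s_functor gpd_d_functor gpd_simplicial_set by blast
qed

end
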